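(* Let $\alpha_1,\dots,\alpha_r\in\mathbb{T}\setminus\{0\}$, $D=\{\alpha_1,\dots,\alpha_r\}$, $\alpha=(\alpha_1,\dots,\alpha_r)\in\mathbb{T}^r$. Then $$\mathrm{Md}_{\mathbb{T}}(D)\ \ge\ \kappa_{\mathbb{T}}(D):=\max\Big\{\min_{i\in[r]}\|\beta_i\|:\ \beta=(\beta_1,\dots,\beta_r)\in\overline{\mathbb{Z}\alpha}\Big\},$$ where $\overline{\mathbb{Z}\alpha}$ is the closure in $\mathbb{T}^r$ of $\{N\alpha: N\in\mathbb{Z}\}$.
   Context: $\mathbb{T}=\mathbb{R}/\mathbb{Z}$ with Haar probability measure $\mu$; $\|x\|$ is the distance to the nearest integer. $\mathrm{Md}_{\mathbb{T}}(D)=\sup\{\mu(A): A\subset\mathbb{T}\text{ Borel},\ (A-A)\cap D=\emptyset\}$. *)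

theory Defs
  imports "HOL-Analysis.Analysis"
begin

text \<open>The torus T = R/Z is modelled by real representatives; a point of T^r by
a vector in real^'r (r = CARD('r)). Haar probability measure on T corresponds to
Lebesgue measure on Borel subsets of [0,1).\<close>

definition tnorm :: "real \<Rightarrow> real" where
  "tnorm x = min (frac x) (1 - frac x)"

definition tcong :: "real \<Rightarrow> real \<Rightarrow> bool" where
  "tcong x y \<longleftrightarrow> x - y \<in> \<int>"

definition Md_T :: "real set \<Rightarrow> real" where
  "Md_T D = Sup {measure lborel A | A. A \<in> sets borel \<and> A \<subseteq> {0..<1} \<and>
      (\<forall>x\<in>A. \<forall>y\<in>A. \<forall>d\<in>D. \<not> tcong (x - y) d)}"

text \<open>Closure of Z alpha in T^r, as a set of real representatives: the closure in R^r of
Z alpha + Z^r (the preimage of the torus closure under the quotient map).\<close>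
definition Zorbit_closure :: "real^'r \<Rightarrow> (real^'r) set" where
  "Zorbit_closure \<alpha> = closure {of_int N *\<^sub>R \<alpha> + (\<chi> i. of_int (k i)) | N k. True}"

definition kappa_T :: "real^'r::finite \<Rightarrow> real" where
  "kappa_T \<alpha> = Sup {Min (range (\<lambda>i. tnorm (\<beta> $ i))) | \<beta>. \<beta> \<in> Zorbit_closure \<alpha>}"

end

theory Submission
  imports Defs
begin

text \<open>If \<open>\<parallel>n d\<parallel> \<ge> c\<close> for every \<open>d \<in> D\<close> and some integer \<open>n \<noteq> 0\<close>, then the set
\<open>A = {x. frac (n x) < c}\<close> has measure \<open>c\<close>, and for \<open>x, y \<in> A\<close> the difference satisfies
\<open>\<parallel>n (x - y)\<parallel> < c\<close>, so \<open>x - y\<close> is never congruent to an element of \<open>D\<close>; hence \<open>Md_T D \<ge> c\<close>.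
A point \<open>\<beta>\<close> of the orbit closure is approximated by some \<open>N \<alpha>\<close> modulo \<open>\<int>\<^sup>r\<close>, and \<open>\<parallel>\<cdot>\<parallel>\<close> is
1-Lipschitz, so \<open>min\<^sub>i \<parallel>N \<alpha>\<^sub>i\<parallel>\<close> is arbitrarily close to \<open>min\<^sub>i \<parallel>\<beta>\<^sub>i\<parallel>\<close>.\<close>

lemma tnorm_le_dist_Ints:
  assumes "n \<in> \<int>"
  shows "tnorm x \<le> \<bar>x - n\<bar>"
proof -
  obtain m where m: "n = of_int m" using assms Ints_cases by blast
  have fl: "of_int \<lfloor>x\<rfloor> \<le> x" "x < of_int \<lfloor>x\<rfloor> + 1" by linarith+
  have "tnorm x \<le> x - of_int \<lfloor>x\<rfloor>" "tnorm x \<le> 1 - (x - of_int \<lfloor>x\<rfloor>)"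
    unfolding tnorm_def frac_def by simp_all
  moreover have "real_of_int m \<le> of_int \<lfloor>x\<rfloor> \<or> real_of_int \<lfloor>x\<rfloor> + 1 \<le> of_int m"
    by (cases "m \<le> \<lfloor>x\<rfloor>") simp_all
  ultimately show ?thesis using fl m by linarith
qed

lemma tnorm_eq_dist_Ints: "\<exists>n\<in>\<int>. tnorm x = \<bar>x - n\<bar>"
proof -
  have fl: "of_int \<lfloor>x\<rfloor> \<le> x" "x < of_int \<lfloor>x\<rfloor> + 1" by linarith+
  show ?thesis
  proof (cases "x - of_int \<lfloor>x\<rfloor> \<le> 1 - (x - of_int \<lfloor>x\<rfloor>)")
    case True
    then have "tnorm x = \<bar>x - of_int \<lfloor>x\<rfloor>\<bar>" unfolding tnorm_def frac_def using fl by simp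
    then show ?thesis using Ints_of_int by blast
  next
    case False
    then have "tnorm x = \<bar>x - of_int (\<lfloor>x\<rfloor> + 1)\<bar>" unfolding tnorm_def frac_def using fl by simp
    then show ?thesis using Ints_of_int by blast
  qed
qed

lemma tnorm_lipschitz: "tnorm x - tnorm y \<le> \<bar>x - y\<bar>"
proof -
  obtain n where "n \<in> \<int>" "tnorm y = \<bar>y - n\<bar>" using tnorm_eq_dist_Ints by blast
  with tnorm_le_dist_Ints[of n x] show ?thesis by linarith
qed

lemma tnorm_add_Ints: "k \<in> \<int> \<Longrightarrow> tnorm (x + k) = tnorm x"
  by (auto simp: tnorm_def elim: Ints_cases)

lemma tnorm_cong: "tcong x y \<Longrightarrow> tnorm x = tnorm y"
  unfolding tcong_def using tnorm_add_Ints[of "x - y" y] by simp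

lemma tnorm_uminus: "tnorm (- x) = tnorm x"
proof (cases "x \<in> \<int>")
  case True
  then have "frac x = 0" "frac (- x) = 0" by (simp_all add: frac_neg)
  then show ?thesis unfolding tnorm_def by (simp only:)
next
  case False
  then show ?thesis by (simp add: tnorm_def frac_neg min.commute)
qed

lemma tnorm_abs_mult: "tnorm (\<bar>a\<bar> * x) = tnorm (a * x)"
proof (cases "a \<ge> 0")
  case False
  then have "\<bar>a\<bar> * x = - (a * x)" by simp
  then show ?thesis by (simp only: tnorm_uminus)
qed simp

lemma tnorm_le_half: "tnorm x \<le> 1/2"
  unfolding tnorm_def by linarith

lemma measure_UN_scaled_intervals:
  fixes n :: nat and c :: real
  assumes n: "n > 0" and c: "0 \<le> c" "c \<le> 1"
  shows "measure lborel (\<Union>k<n. {real k / n ..< (real k + c) / n}) = c"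
proof -
  have le: "real k / n \<le> (real k + c) / n" for k
    using c by (simp add: divide_right_mono)
  have "disjoint_family_on (\<lambda>k. {real k / n ..< (real k + c) / n}) {..<n}"
    unfolding disjoint_family_on_def
  proof (intro ballI impI)
    fix k l :: nat assume "k \<noteq> l"
    then have "real k + c \<le> real l \<or> real l + c \<le> real k" using c by linarith
    then have "(real k + c) / n \<le> real l / n \<or> (real l + c) / n \<le> real k / n"
      by (auto intro: divide_right_mono)
    then show "{real k / n ..< (real k + c) / n} \<inter> {real l / n ..< (real l + c) / n} = {}"
      by auto
  qed
  then have "measure lborel (\<Union>k<n. {real k / n ..< (real k + c) / n})
      = (\<Sum>k<n. measure lborel {real k / n ..< (real k + c) / n})"
    using le by (intro measure_finite_Union) (auto simp: emeasure_lborel_Ico)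
  also have "\<dots> = (\<Sum>k<n. c / n)"
    using le by (simp add: diff_divide_distrib[symmetric])
  also have "\<dots> = c" using n by simp
  finally show ?thesis .
qed

lemma measure_le_Md_T:
  assumes "A \<in> sets borel" "A \<subseteq> {0..<1}" "\<forall>x\<in>A. \<forall>y\<in>A. \<forall>d\<in>D. \<not> tcong (x - y) d"
  shows "measure lborel A \<le> Md_T D"
proof -
  have "bdd_above {measure lborel A | A. A \<in> sets borel \<and> A \<subseteq> {0..<1} \<and>
      (\<forall>x\<in>A. \<forall>y\<in>A. \<forall>d\<in>D. \<not> tcong (x - y) d)}"
  proof (rule bdd_aboveI[of _ 1], clarify)
    fix B :: "real set" assume "B \<in> sets borel" "B \<subseteq> {0..<1}"
    moreover have "{0..1::real} \<in> fmeasurable lborel"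
      using fmeasurable_cbox[of "0::real" 1] by simp
    ultimately have "measure lborel B \<le> measure lborel {0..1::real}"
      by (intro measure_mono_fmeasurable) auto
    then show "measure lborel B \<le> 1" by simp
  qed
  then show ?thesis unfolding Md_T_def using assms by (intro cSup_upper) auto
qed

lemma Md_T_nonneg: "0 \<le> Md_T D"
  using measure_le_Md_T[of "{}" D] by simp

lemma Md_T_ge_if_multiple_far_from_Ints:
  fixes n :: nat and D :: "real set"
  assumes n: "n > 0" and c: "0 \<le> c" "c \<le> 1" and far: "\<forall>d\<in>D. c \<le> tnorm (real n * d)"
  shows "c \<le> Md_T D"
proof -
  define A where "A = (\<Union>k<n. {real k / n ..< (real k + c) / n})"
  have A_frac: "\<exists>k::int. of_int k \<le> real n * x \<and> real n * x < of_int k + c" if "x \<in> A" for x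
  proof -
    obtain k where "k < n" "real k / n \<le> x" "x < (real k + c) / n"
      using \<open>x \<in> A\<close> unfolding A_def by auto
    then have "real k \<le> real n * x" "real n * x < real k + c"
      using n by (simp_all add: pos_divide_le_eq pos_less_divide_eq mult.commute)
    then show ?thesis by (intro exI[of _ "int k"]) simp
  qed
  have "A \<subseteq> {0..<1}"
  proof
    fix x assume "x \<in> A"
    then obtain k where "k < n" "real k / n \<le> x" "x < (real k + c) / n"
      unfolding A_def by auto
    moreover have "(real k + c) / n \<le> 1"
      using \<open>k < n\<close> c by (simp add: divide_le_eq_1)
    moreover have "0 \<le> real k / n" by simp
    ultimately have "0 \<le> x" "x < 1" by linarith+
    then show "x \<in> {0..<1}" by simp
  qed
  moreover have "\<forall>x\<in>A. \<forall>y\<in>A. \<forall>d\<in>D. \<not> tcong (x - y) d"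
  proof (intro ballI notI)
    fix x y d assume "x \<in> A" "y \<in> A" "d \<in> D" and cong: "tcong (x - y) d"
    obtain k where k: "of_int k \<le> real n * x" "real n * x < of_int k + c"
      using A_frac[OF \<open>x \<in> A\<close>] by blast
    obtain l where l: "of_int l \<le> real n * y" "real n * y < of_int l + c"
      using A_frac[OF \<open>y \<in> A\<close>] by blast
    have "tcong (real n * (x - y)) (real n * d)"
      using cong unfolding tcong_def
      by (metis Ints_mult Ints_of_nat right_diff_distrib)
    then have "tnorm (real n * d) = tnorm (real n * (x - y))"
      by (simp add: tnorm_cong)
    also have "\<dots> \<le> \<bar>real n * (x - y) - of_int (k - l)\<bar>"
      by (rule tnorm_le_dist_Ints) simp
    also have "\<dots> < c"
      using k l by (simp add: right_diff_distrib abs_less_iff)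
    finally show False using far \<open>d \<in> D\<close> by fastforce
  qed
  moreover have "A \<in> sets borel" unfolding A_def by auto
  moreover have "measure lborel A = c"
    unfolding A_def using measure_UN_scaled_intervals n c by blast
  ultimately show ?thesis using measure_le_Md_T by metis
qed

lemma min_tnorm_le_Md_T:
  fixes \<alpha> \<beta> :: "real^'r::finite"
  assumes \<beta>: "\<beta> \<in> Zorbit_closure \<alpha>"
  shows "Min (range (\<lambda>i. tnorm (\<beta> $ i))) \<le> Md_T (range (\<lambda>i. \<alpha> $ i))"
proof (rule field_le_epsilon)
  define \<delta> where "\<delta> = Min (range (\<lambda>i. tnorm (\<beta> $ i)))"
  fix e :: real assume "0 < e"
  show "\<delta> \<le> Md_T (range (\<lambda>i. \<alpha> $ i)) + e"
  proof (cases "\<delta> \<le> e")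
    case True
    then show ?thesis using Md_T_nonneg[of "range (\<lambda>i. \<alpha> $ i)"] by linarith
  next
    case False
    obtain N k where close: "dist (of_int N *\<^sub>R \<alpha> + (\<chi> i. of_int (k i))) \<beta> < e"
      using \<beta> \<open>0 < e\<close> unfolding Zorbit_closure_def closure_approachable by blast
    have far: "\<delta> - e \<le> tnorm (of_int N * \<alpha> $ i)" for i
    proof -
      let ?y = "of_int N *\<^sub>R \<alpha> + (\<chi> i. of_int (k i))"
      have "\<bar>\<beta> $ i - ?y $ i\<bar> < e"
        using close component_le_norm_cart[of "\<beta> - ?y" i]
        by (simp add: dist_norm norm_minus_commute)
      moreover have "tnorm (?y $ i) = tnorm (of_int N * \<alpha> $ i)"
        by (simp add: tnorm_add_Ints)
      moreover have "\<delta> \<le> tnorm (\<beta> $ i)" unfolding \<delta>_def by (rule Min_le) auto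
      ultimately show ?thesis using tnorm_lipschitz[of "\<beta> $ i" "?y $ i"] by linarith
    qed
    have "N \<noteq> 0"
      using far[of undefined] False by (auto simp: tnorm_def)
    moreover have "\<delta> \<le> 1/2"
      unfolding \<delta>_def by (rule order_trans[OF Min_le tnorm_le_half]) auto
    ultimately have "\<delta> - e \<le> Md_T (range (\<lambda>i. \<alpha> $ i))"
      using False far \<open>0 < e\<close>
      by (intro Md_T_ge_if_multiple_far_from_Ints[where n = "nat \<bar>N\<bar>"])
         (simp_all add: tnorm_abs_mult)
    then show ?thesis by linarith
  qed
qed

lemma self_in_Zorbit_closure: "\<alpha> \<in> Zorbit_closure \<alpha>"
proof -
  have "\<alpha> = of_int 1 *\<^sub>R \<alpha> + (\<chi> i. of_int ((\<lambda>_. 0) i))"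
    by (simp add: vec_eq_iff)
  then show ?thesis
    unfolding Zorbit_closure_def
    by (intro closure_subset[THEN subsetD] CollectI exI[of _ 1] exI[of _ "\<lambda>_. 0"] conjI TrueI)
qed

theorem mainTheorem13:
  fixes \<alpha> :: "real^'r::finite"
  assumes "\<forall>i. \<alpha> $ i \<notin> \<int>"
  shows "Md_T (range (\<lambda>i. \<alpha> $ i)) \<ge> kappa_T \<alpha>"
  unfolding kappa_T_def
proof (rule cSup_least)
  show "{Min (range (\<lambda>i. tnorm (\<beta> $ i))) | \<beta>. \<beta> \<in> Zorbit_closure \<alpha>} \<noteq> {}"
    using self_in_Zorbit_closure by blast
qed (auto intro: min_tnorm_le_Md_T)

end
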